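(* For every $n \geq 2$ and $d \geq 3$, the locally compact group $H_{n,d} = \mathfrak{S}_n^{V_d,\mathfrak{S}_{n-1}} \rtimes K_d$ is strongly amenable.
   Context: $T_d$ is the $d$-regular tree with vertex set $V_d$; $v_0 \in V_d$ is fixed and $K_d$ is the stabilizer of $v_0$ in $\mathrm{Aut}(T_d)$ (a compact group). $\Sigma_n=\{0,\ldots,n-1\}$, $\mathfrak S_n=\mathrm{Sym}(\Sigma_n)$, $\mathfrak S_{n-1}$ the stabilizer of $0$; $\mathfrak{S}_n^{V_d,\mathfrak{S}_{n-1}}$ is the group of $(\sigma_v)_{v\in V_d}$ with $\sigma_v\in\mathfrak S_{n-1}$ for all but finitely many $v$, topologized so that the product group $\mathfrak{S}_{n-1}^{V_d}$ is a compact open subgroup; $K_d$ acts by $(\gamma\sigma)_v = \sigma_{\gamma^{-1}v}$ and $H_{n,d}$ has the topology making $\mathfrak{S}_{n-1}^{V_d}\rtimes K_d$ (product topology) open. A topological group $G$ is strongly amenable if every continuous proximal action of $G$ on a compact Hausdorff space $Y$ has a fixed point; an action is proximal if for all $y,y'\in Y$ the closure of the $G$-orbit of $(y,y')$ in $Y\times Y$ meets the diagonal. *)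

theory Defs
  imports "HOL-Analysis.Analysis" "HOL-Combinatorics.Permutations"
begin

definition graph_cycle :: "('v \<Rightarrow> 'v \<Rightarrow> bool) \<Rightarrow> 'v list \<Rightarrow> bool" where
  "graph_cycle E xs \<longleftrightarrow> length xs \<ge> 3 \<and> distinct xs \<and>
     (\<forall>i < length xs. E (xs ! i) (xs ! ((i + 1) mod length xs)))"

definition regular_tree :: "('v \<Rightarrow> 'v \<Rightarrow> bool) \<Rightarrow> nat \<Rightarrow> bool" where
  "regular_tree E d \<longleftrightarrow>
     (\<forall>x y. E x y \<longrightarrow> E y x) \<and> (\<forall>x. \<not> E x x) \<and>
     (\<forall>x y. E\<^sup>*\<^sup>* x y) \<and> (\<nexists>xs. graph_cycle E xs) \<and>
     (\<forall>x. finite {y. E x y} \<and> card {y. E x y} = d)"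

definition tree_aut :: "('v \<Rightarrow> 'v \<Rightarrow> bool) \<Rightarrow> ('v \<Rightarrow> 'v) set" where
  "tree_aut E = {g. bij g \<and> (\<forall>x y. E x y \<longleftrightarrow> E (g x) (g y))}"

definition stab_K :: "('v \<Rightarrow> 'v \<Rightarrow> bool) \<Rightarrow> 'v \<Rightarrow> ('v \<Rightarrow> 'v) set" where
  "stab_K E v0 = {g \<in> tree_aut E. g v0 = v0}"

text \<open>Permutations of Sigma_n = {0..<n}, as functions nat => nat fixing everything outside.
  The group S_n^{V, S_{n-1}} consists of families sigma with sigma v 0 = 0 for all but
  finitely many v.\<close>

definition Hgrp :: "nat \<Rightarrow> ('v \<Rightarrow> 'v \<Rightarrow> bool) \<Rightarrow> 'v \<Rightarrow> (('v \<Rightarrow> nat \<Rightarrow> nat) \<times> ('v \<Rightarrow> 'v)) set" where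
  "Hgrp n E v0 = {(\<sigma>, \<gamma>). (\<forall>v. \<sigma> v permutes {..<n}) \<and> finite {v. \<sigma> v 0 \<noteq> 0} \<and> \<gamma> \<in> stab_K E v0}"

text \<open>Semidirect product law: (sigma,gamma)(tau,delta) = (sigma * gamma.tau, gamma o delta),
  where (gamma.tau)_v = tau_{gamma^{-1} v} and the product in S_n^V is pointwise composition.\<close>

definition Hmult :: "(('v \<Rightarrow> nat \<Rightarrow> nat) \<times> ('v \<Rightarrow> 'v)) \<Rightarrow> (('v \<Rightarrow> nat \<Rightarrow> nat) \<times> ('v \<Rightarrow> 'v))
                     \<Rightarrow> (('v \<Rightarrow> nat \<Rightarrow> nat) \<times> ('v \<Rightarrow> 'v))" where
  "Hmult g h = (\<lambda>v. fst g v \<circ> fst h (inv (snd g) v), snd g \<circ> snd h)"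

definition Hone :: "('v \<Rightarrow> nat \<Rightarrow> nat) \<times> ('v \<Rightarrow> 'v)" where
  "Hone = (\<lambda>v. id, id)"

text \<open>The compact open subgroup U = S_{n-1}^V \<rtimes> K with the product topology:
  S_{n-1} discrete, K with the topology of pointwise convergence on V (each coordinate discrete).\<close>

definition Usub :: "nat \<Rightarrow> ('v \<Rightarrow> 'v \<Rightarrow> bool) \<Rightarrow> 'v \<Rightarrow> (('v \<Rightarrow> nat \<Rightarrow> nat) \<times> ('v \<Rightarrow> 'v)) set" where
  "Usub n E v0 = {(\<sigma>, \<gamma>). (\<forall>v. \<sigma> v permutes {..<n} \<and> \<sigma> v 0 = 0) \<and> \<gamma> \<in> stab_K E v0}"

definition Utop :: "nat \<Rightarrow> ('v \<Rightarrow> 'v \<Rightarrow> bool) \<Rightarrow> 'v \<Rightarrow> (('v \<Rightarrow> nat \<Rightarrow> nat) \<times> ('v \<Rightarrow> 'v)) topology" where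
  "Utop n E v0 =
     prod_topology
       (product_topology (\<lambda>v. discrete_topology {p. p permutes {..<n} \<and> p 0 = 0}) UNIV)
       (subtopology (product_topology (\<lambda>v. discrete_topology (UNIV :: 'v set)) UNIV) (stab_K E v0))"

text \<open>The topology on H: W is open iff every left translate g^{-1}W meets U in an open set of U
  (the group topology in which U, with its product topology, is an open subgroup).\<close>

definition Htop :: "nat \<Rightarrow> ('v \<Rightarrow> 'v \<Rightarrow> bool) \<Rightarrow> 'v \<Rightarrow> (('v \<Rightarrow> nat \<Rightarrow> nat) \<times> ('v \<Rightarrow> 'v)) topology" where
  "Htop n E v0 = topology (\<lambda>W. W \<subseteq> Hgrp n E v0 \<and>
      (\<forall>g \<in> Hgrp n E v0. openin (Utop n E v0) {u \<in> Usub n E v0. Hmult g u \<in> W}))"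

definition continuous_action ::
  "'g set \<Rightarrow> ('g \<Rightarrow> 'g \<Rightarrow> 'g) \<Rightarrow> 'g \<Rightarrow> 'g topology \<Rightarrow> 'y topology \<Rightarrow> ('g \<Rightarrow> 'y \<Rightarrow> 'y) \<Rightarrow> bool" where
  "continuous_action G m e TG TY a \<longleftrightarrow>
     continuous_map (prod_topology TG TY) TY (\<lambda>(g, y). a g y) \<and>
     (\<forall>y \<in> topspace TY. a e y = y) \<and>
     (\<forall>g \<in> G. \<forall>h \<in> G. \<forall>y \<in> topspace TY. a (m g h) y = a g (a h y))"

definition proximal_action :: "'g set \<Rightarrow> 'y topology \<Rightarrow> ('g \<Rightarrow> 'y \<Rightarrow> 'y) \<Rightarrow> bool" where
  "proximal_action G TY a \<longleftrightarrow>
     (\<forall>y \<in> topspace TY. \<forall>y' \<in> topspace TY.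
        (prod_topology TY TY) closure_of ((\<lambda>g. (a g y, a g y')) ` G) \<inter> {(z, z) | z. z \<in> topspace TY} \<noteq> {})"

text \<open>Strong amenability, with compact Hausdorff spaces ranging over (subsets of) the type 'y;
  a theorem with 'y a free type variable covers all compact Hausdorff spaces.\<close>

definition strongly_amenable ::
  "'y itself \<Rightarrow> 'g set \<Rightarrow> ('g \<Rightarrow> 'g \<Rightarrow> 'g) \<Rightarrow> 'g \<Rightarrow> 'g topology \<Rightarrow> bool" where
  "strongly_amenable _ G m e TG \<longleftrightarrow>
     (\<forall>(TY :: 'y topology) a.
        compact_space TY \<and> Hausdorff_space TY \<and> topspace TY \<noteq> {} \<and>
        continuous_action G m e TG TY a \<and> proximal_action G TY a
        \<longrightarrow> (\<exists>y \<in> topspace TY. \<forall>g \<in> G. a g y = y))"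

end

theory Submission
  imports Defs
begin

text \<open>
  \<open>H\<close> is the increasing union of the sets \<open>M\<^sub>r U\<close>, where \<open>M\<^sub>r\<close> (permutations supported on the
  ball of radius \<open>r\<close> around \<open>v0\<close>, trivial tree part) is finite and normalised by \<open>H\<close>, and
  \<open>U = \<SS>\<^sub>n\<^sub>-\<^sub>1\<^sup>V \<rtimes> K\<close> is compact. In a proximal action on a compact space, a point whose stabiliser
  in a finite normalised set \<open>M\<close> is as large as possible is fixed by all of \<open>M\<close>: if \<open>x \<in> M\<close> moved
  it to \<open>x y\<close>, a diagonal limit point of the orbit of \<open>(y, x y)\<close> would be fixed by a conjugate of
  \<open>x\<close> and by a conjugate of that stabiliser. So the fixed sets of the \<open>M\<^sub>r\<close> form a nested family of
  nonempty closed sets, whose intersection \<open>F\<close> is \<open>H\<close>-invariant, and on \<open>F\<close> each \<open>h = m u\<close> acts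
  as \<open>u\<close>. For \<open>y \<in> F\<close> and \<open>g \<in> H\<close> the orbit of \<open>(y, g y)\<close> therefore lies in the compact image of
  \<open>U\<close>, so its diagonal limit point is \<open>(u y, u g y)\<close> for some \<open>u\<close>, and \<open>g y = y\<close>.
\<close>

section \<open>Fixed points of proximal actions\<close>

definition common_fixed_points :: "'y topology \<Rightarrow> ('g \<Rightarrow> 'y \<Rightarrow> 'y) \<Rightarrow> 'g set \<Rightarrow> 'y set" where
  "common_fixed_points TY a S = {y \<in> topspace TY. \<forall>s\<in>S. a s y = y}"

lemma continuous_action_slice:
  assumes "continuous_action G m e TG TY a" "g \<in> topspace TG"
  shows "continuous_map TY TY (a g)"
proof -
  have "continuous_map TY (prod_topology TG TY) (\<lambda>y. (g, y))"
    using assms(2) by (intro continuous_map_pairedI continuous_map_id) auto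
  moreover have "continuous_map (prod_topology TG TY) TY (\<lambda>(g, y). a g y)"
    using assms(1) by (simp add: continuous_action_def)
  ultimately show ?thesis
    by (auto dest: continuous_map_compose simp: o_def)
qed

lemma continuous_action_orbit_map:
  assumes "continuous_action G m e TG TY a" "y \<in> topspace TY"
  shows "continuous_map TG TY (\<lambda>g. a g y)"
proof -
  have "continuous_map TG (prod_topology TG TY) (\<lambda>g. (g, y))"
    using assms(2) by (intro continuous_map_pairedI continuous_map_id) auto
  moreover have "continuous_map (prod_topology TG TY) TY (\<lambda>(g, y). a g y)"
    using assms(1) by (simp add: continuous_action_def)
  ultimately show ?thesis
    by (auto dest: continuous_map_compose simp: o_def)
qed

lemma continuous_action_in_topspace:
  assumes "continuous_action G m e TG TY a" "g \<in> topspace TG" "y \<in> topspace TY"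
  shows "a g y \<in> topspace TY"
  using continuous_action_slice[OF assms(1,2)] assms(3) by (auto simp: continuous_map_def)

lemma closedin_common_fixed_points:
  assumes "continuous_action G m e TG TY a" "Hausdorff_space TY" "S \<subseteq> topspace TG"
  shows "closedin TY (common_fixed_points TY a S)"
proof -
  have "common_fixed_points TY a S =
          topspace TY \<inter> (\<Inter>s\<in>S. {y \<in> topspace TY. a s y = id y})"
    by (auto simp: common_fixed_points_def)
  moreover have "closedin TY {y \<in> topspace TY. a s y = id y}" if "s \<in> S" for s
    using that assms(3)
    by (intro closedin_continuous_maps_eq[OF assms(2)] continuous_action_slice[OF assms(1)]
        continuous_map_id) auto
  ultimately show ?thesis
    by (cases "S = {}") (auto intro!: closedin_Int closedin_INT)
qed

lemma closedin_action_graph_over_fixed_points: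
  assumes act: "continuous_action G m e TG TY a" and H: "Hausdorff_space TY"
    and "x \<in> topspace TG" "T \<subseteq> topspace TG"
  shows "closedin (prod_topology TY TY) {(p, q). p \<in> common_fixed_points TY a T \<and> q = a x p}"
proof -
  have "{(p, q). p \<in> common_fixed_points TY a T \<and> q = a x p} =
          {pq \<in> topspace (prod_topology TY TY). snd pq = (a x \<circ> fst) pq}
          \<inter> {pq \<in> topspace (prod_topology TY TY). fst pq \<in> common_fixed_points TY a T}"
    using continuous_action_in_topspace[OF act \<open>x \<in> topspace TG\<close>]
    by (auto simp: common_fixed_points_def)
  also have "closedin (prod_topology TY TY) \<dots>"
    using assms
    by (intro closedin_Int closedin_continuous_maps_eq[OF H] continuous_map_snd
        continuous_map_compose[OF continuous_map_fst] continuous_action_slice[OF act]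
        closedin_continuous_map_preimage[OF continuous_map_fst] closedin_common_fixed_points)
  finally show ?thesis .
qed

lemma action_intertwines:
  assumes act: "continuous_action G m e TG TY a" and "h \<in> G" "x \<in> G" "x' \<in> G"
    and "m h x = m x' h" and "y \<in> topspace TY"
  shows "a x' (a h y) = a h (a x y)"
proof -
  have "\<forall>g\<in>G. \<forall>h\<in>G. \<forall>y\<in>topspace TY. a (m g h) y = a g (a h y)"
    using act by (simp add: continuous_action_def)
  then have "a x' (a h y) = a (m x' h) y" "a h (a x y) = a (m h x) y"
    using assms(2-4,6) by auto
  with \<open>m h x = m x' h\<close> show ?thesis by simp
qed

lemma common_fixed_points_translate:
  assumes act: "continuous_action G m e TG TY a" and GT: "G \<subseteq> topspace TG"
    and h: "h \<in> G" and SG: "S \<subseteq> G" "c ` S \<subseteq> G" and c: "\<And>x. x \<in> S \<Longrightarrow> m h x = m (c x) h"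
    and y: "y \<in> common_fixed_points TY a S"
  shows "a h y \<in> common_fixed_points TY a (c ` S)"
proof -
  have yT: "y \<in> topspace TY" using y by (simp add: common_fixed_points_def)
  have "a (c x) (a h y) = a h y" if "x \<in> S" for x
    using action_intertwines[OF act h _ _ c[OF that] yT] that SG y
    by (auto simp: common_fixed_points_def)
  then show ?thesis
    using continuous_action_in_topspace[OF act _ yT] h GT by (auto simp: common_fixed_points_def)
qed

lemma common_fixed_points_normalised_invariant:
  assumes act: "continuous_action G m e TG TY a" and GT: "G \<subseteq> topspace TG" and MG: "M \<subseteq> G"
    and h: "h \<in> G" and c: "bij_betw c M M" "\<And>x. x \<in> M \<Longrightarrow> m h x = m (c x) h"
    and w: "w \<in> common_fixed_points TY a M"
  shows "a h w \<in> common_fixed_points TY a M"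
  using common_fixed_points_translate[OF act GT h MG _ c(2) w] MG
  unfolding bij_betw_imp_surj_on[OF c(1)] by blast

lemma closedin_pairs_moved_over_fixed_points:
  assumes act: "continuous_action G m e TG TY a" and H: "Hausdorff_space TY"
    and fin: "finite M" and "M \<subseteq> topspace TG"
  shows "closedin (prod_topology TY TY)
           {(p, q). \<exists>x\<in>M. \<exists>T\<subseteq>M. x \<notin> T \<and> card T = k \<and>
                    p \<in> common_fixed_points TY a T \<and> q = a x p}"
proof -
  let ?P = "{(x, T). x \<in> M \<and> T \<subseteq> M \<and> x \<notin> T \<and> card T = k}"
  let ?W = "\<lambda>(x, T). {(p, q). p \<in> common_fixed_points TY a T \<and> q = a x p}"
  have "finite ?P"
    by (rule finite_subset[of _ "M \<times> Pow M"]) (auto simp: fin)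
  moreover have "closedin (prod_topology TY TY) (?W xT)" if "xT \<in> ?P" for xT
    using that assms(4) by (auto intro!: closedin_action_graph_over_fixed_points[OF act H])
  ultimately have "closedin (prod_topology TY TY) (\<Union>(?W ` ?P))"
    by (intro closedin_Union) auto
  moreover have "\<Union>(?W ` ?P) = {(p, q). \<exists>x\<in>M. \<exists>T\<subseteq>M. x \<notin> T \<and> card T = k \<and>
                    p \<in> common_fixed_points TY a T \<and> q = a x p}"
    by blast
  ultimately show ?thesis by simp
qed

lemma proximal_stabiliser_grows:
  fixes M :: "'g set"
  assumes act: "continuous_action G m e TG TY a" and prox: "proximal_action G TY a"
    and H: "Hausdorff_space TY" and fin: "finite M" and MG: "M \<subseteq> G" and GT: "G \<subseteq> topspace TG"
    and conj: "\<And>h. h \<in> G \<Longrightarrow> \<exists>c. bij_betw c M M \<and> (\<forall>x\<in>M. m h x = m (c x) h)"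
    and y0: "y0 \<in> topspace TY" and x0: "x0 \<in> M" "a x0 y0 \<noteq> y0"
  shows "\<exists>z\<in>topspace TY. card {x\<in>M. a x y0 = y0} < card {x\<in>M. a x z = z}"
proof -
  define S where "S = {x\<in>M. a x y0 = y0}"
  let ?C = "{(p, q). \<exists>x\<in>M. \<exists>T\<subseteq>M. x \<notin> T \<and> card T = card S \<and>
                     p \<in> common_fixed_points TY a T \<and> q = a x p}"
  have closed: "closedin (prod_topology TY TY) ?C"
    using MG GT by (intro closedin_pairs_moved_over_fixed_points[OF act H fin]) auto
  have orbit: "(\<lambda>g. (a g y0, a g (a x0 y0))) ` G \<subseteq> ?C"
  proof clarify
    fix h assume h: "h \<in> G"
    then obtain c where c: "bij_betw c M M" "\<And>x. x \<in> M \<Longrightarrow> m h x = m (c x) h"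
      using conj by blast
    have cM: "c ` M \<subseteq> M" and SM: "S \<subseteq> M" and "x0 \<notin> S"
      using c(1) x0 by (auto simp: S_def bij_betw_def)
    have "c x0 \<notin> c ` S"
      using c(1) x0(1) SM \<open>x0 \<notin> S\<close> by (meson bij_betw_def inj_on_image_mem_iff)
    moreover have "card (c ` S) = card S"
      using c(1) SM by (meson bij_betw_def card_image inj_on_subset)
    moreover have "a h y0 \<in> common_fixed_points TY a (c ` S)"
      using SM cM MG y0 c(2)
      by (intro common_fixed_points_translate[OF act GT h]) (auto simp: common_fixed_points_def S_def)
    moreover have "a (c x0) (a h y0) = a h (a x0 y0)"
      using action_intertwines[OF act h _ _ c(2)[OF x0(1)] y0] x0(1) cM MG by blast
    ultimately show "\<exists>x\<in>M. \<exists>T\<subseteq>M. x \<notin> T \<and> card T = card S \<and>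
        a h y0 \<in> common_fixed_points TY a T \<and> a h (a x0 y0) = a x (a h y0)"
      using cM SM x0(1) by (intro bexI[of _ "c x0"] exI[of _ "c ` S"]) auto
  qed
  obtain z where "(z, z) \<in> prod_topology TY TY closure_of (\<lambda>g. (a g y0, a g (a x0 y0))) ` G"
    using prox y0 x0 MG GT continuous_action_in_topspace[OF act]
    unfolding proximal_action_def by blast
  with closure_of_minimal[OF orbit closed] obtain x T where "x \<in> M" "T \<subseteq> M" "x \<notin> T"
    "card T = card S" "z \<in> common_fixed_points TY a T" "a x z = z"
    by auto
  then have sub: "insert x T \<subseteq> {x\<in>M. a x z = z}" and z: "z \<in> topspace TY"
    and card: "card (insert x T) = Suc (card S)"
    using fin by (auto simp: common_fixed_points_def finite_subset)
  have "card S < card {x\<in>M. a x z = z}"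
    using card_mono[OF _ sub] fin card by simp
  then show ?thesis
    using z unfolding S_def by blast
qed

lemma proximal_common_fixed_point_finite:
  fixes M :: "'g set"
  assumes act: "continuous_action G m e TG TY a" and prox: "proximal_action G TY a"
    and H: "Hausdorff_space TY" and ne: "topspace TY \<noteq> {}"
    and fin: "finite M" and MG: "M \<subseteq> G" and GT: "G \<subseteq> topspace TG"
    and conj: "\<And>h. h \<in> G \<Longrightarrow> \<exists>c. bij_betw c M M \<and> (\<forall>x\<in>M. m h x = m (c x) h)"
  shows "common_fixed_points TY a M \<noteq> {}"
proof -
  let ?stab = "\<lambda>y. card {x\<in>M. a x y = y}"
  have "?stab y < Suc (card M)" for y
    using fin by (simp add: card_mono le_imp_less_Suc)
  then obtain y0 where y0: "y0 \<in> topspace TY"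
    and max: "\<And>y. y \<in> topspace TY \<Longrightarrow> ?stab y \<le> ?stab y0"
    using ex_has_greatest_nat[of "\<lambda>y. y \<in> topspace TY" _ ?stab "Suc (card M)"] ne by blast
  have "\<forall>x\<in>M. a x y0 = y0"
  proof (rule ccontr)
    assume "\<not> (\<forall>x\<in>M. a x y0 = y0)"
    then obtain x0 where "x0 \<in> M" "a x0 y0 \<noteq> y0" by blast
    from proximal_stabiliser_grows[OF act prox H fin MG GT conj y0 this] max
    show False by (meson not_le)
  qed
  then show ?thesis
    using y0 by (auto simp: common_fixed_points_def)
qed

lemma proximal_points_equal_if_acting_through_compact:
  assumes act: "continuous_action G m e TG TY a" and prox: "proximal_action G TY a"
    and H: "Hausdorff_space TY" and U: "compactin TG U" "U \<subseteq> G"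
    and inverse: "\<And>u. u \<in> U \<Longrightarrow> \<exists>u'\<in>G. m u' u = e"
    and y: "y \<in> topspace TY" "y' \<in> topspace TY"
    and through: "\<And>h. h \<in> G \<Longrightarrow> \<exists>u\<in>U. a h y = a u y \<and> a h y' = a u y'"
  shows "y = y'"
proof -
  let ?pair = "\<lambda>g. (a g y, a g y')"
  have "compactin (prod_topology TY TY) (?pair ` U)"
    using y by (intro image_compactin[OF U(1)] continuous_map_pairedI continuous_action_orbit_map[OF act])
  then have closed: "closedin (prod_topology TY TY) (?pair ` U)"
    using H by (simp add: compactin_imp_closedin Hausdorff_space_prod_topology)
  have orbit: "?pair ` G \<subseteq> ?pair ` U"
  proof (rule image_subsetI)
    fix h assume "h \<in> G"
    then obtain u where "u \<in> U" "a h y = a u y" "a h y' = a u y'"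
      using through by blast
    then show "?pair h \<in> ?pair ` U" by auto
  qed
  obtain z where "(z, z) \<in> prod_topology TY TY closure_of (?pair ` G)"
    using prox y unfolding proximal_action_def by blast
  then have "(z, z) \<in> ?pair ` U"
    using closure_of_minimal[OF orbit closed] by blast
  then obtain u where u: "u \<in> U" "a u y = z" "a u y' = z"
    by auto
  obtain u' where u': "u' \<in> G" "m u' u = e"
    using inverse[OF u(1)] by blast
  have law: "a (m u' u) w = a u' (a u w)" and one: "a e w = w" if "w \<in> topspace TY" for w
    using act u(1) u'(1) U(2) that by (auto simp: continuous_action_def)
  show ?thesis
    using law[OF y(1)] law[OF y(2)] one[OF y(1)] one[OF y(2)] u u'(2) by simp
qed

lemma proximal_common_fixed_point_chain:
  fixes M :: "nat \<Rightarrow> 'g set"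
  assumes act: "continuous_action G m e TG TY a" and prox: "proximal_action G TY a"
    and cpt: "compact_space TY" and H: "Hausdorff_space TY" and ne: "topspace TY \<noteq> {}"
    and GT: "G \<subseteq> topspace TG" and fin: "\<And>r. finite (M r)" and MG: "\<And>r. M r \<subseteq> G"
    and inc: "incseq M"
    and conj: "\<And>h r. h \<in> G \<Longrightarrow> \<exists>c. bij_betw c (M r) (M r) \<and> (\<forall>x\<in>M r. m h x = m (c x) h)"
  shows "(\<Inter>r. common_fixed_points TY a (M r)) \<noteq> {}"
proof (rule compact_space_imp_nest[OF cpt])
  show "closedin TY (common_fixed_points TY a (M r))" for r
    using MG GT by (intro closedin_common_fixed_points[OF act H]) auto
  show "common_fixed_points TY a (M r) \<noteq> {}" for r
    using MG GT by (intro proximal_common_fixed_point_finite[OF act prox H ne fin _ GT conj]) auto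
  show "decseq (\<lambda>r. common_fixed_points TY a (M r))"
    using inc by (auto simp: decseq_def incseq_def common_fixed_points_def)
qed

theorem strongly_amenable_finite_chain_times_compact:
  fixes M :: "nat \<Rightarrow> 'g set"
  assumes GT: "G \<subseteq> topspace TG"
    and fin: "\<And>r. finite (M r)" and MG: "\<And>r. M r \<subseteq> G" and inc: "incseq M"
    and conj: "\<And>h r. h \<in> G \<Longrightarrow> \<exists>c. bij_betw c (M r) (M r) \<and> (\<forall>x\<in>M r. m h x = m (c x) h)"
    and U: "compactin TG U" "U \<subseteq> G"
    and inverse: "\<And>u. u \<in> U \<Longrightarrow> \<exists>u'\<in>G. m u' u = e"
    and decomp: "\<And>h. h \<in> G \<Longrightarrow> \<exists>r. \<exists>x\<in>M r. \<exists>u\<in>U. h = m x u"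
  shows "strongly_amenable TYPE('y) G m e TG"
proof (unfold strongly_amenable_def, intro allI impI, elim conjE)
  fix TY :: "'y topology" and a
  assume cpt: "compact_space TY" and H: "Hausdorff_space TY" and ne: "topspace TY \<noteq> {}"
    and act: "continuous_action G m e TG TY a" and prox: "proximal_action G TY a"
  define F where "F = (\<Inter>r. common_fixed_points TY a (M r))"
  obtain y where y: "y \<in> F"
    using proximal_common_fixed_point_chain[OF act prox cpt H ne GT fin MG inc conj]
    unfolding F_def by blast
  have invariant: "a h w \<in> F" if h: "h \<in> G" and w: "w \<in> F" for h w
    using conj[OF h] common_fixed_points_normalised_invariant[OF act GT MG h] w
    unfolding F_def by blast
  have through: "\<exists>u\<in>U. \<forall>w\<in>F. a h w = a u w" if h: "h \<in> G" for h
  proof -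
    obtain r x u where x: "x \<in> M r" and u: "u \<in> U" and hxu: "h = m x u"
      using decomp[OF h] by blast
    have "a h w = a u w" if w: "w \<in> F" for w
    proof -
      have "u \<in> G" "x \<in> G" using u x U(2) MG by blast+
      moreover have "a u w \<in> common_fixed_points TY a (M r)"
        using invariant[OF \<open>u \<in> G\<close> w] unfolding F_def by blast
      moreover have "w \<in> topspace TY"
        using w unfolding F_def common_fixed_points_def by blast
      ultimately show ?thesis
        using act x hxu by (simp add: continuous_action_def common_fixed_points_def)
    qed
    then show ?thesis using u by blast
  qed
  have FT: "F \<subseteq> topspace TY"
    by (auto simp: F_def common_fixed_points_def)
  have "a g y = y" if g: "g \<in> G" for g
  proof -
    have "\<exists>u\<in>U. a h (a g y) = a u (a g y) \<and> a h y = a u y" if "h \<in> G" for h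
      using through[OF that] invariant[OF g y] y by blast
    with FT invariant[OF g y] y
    show ?thesis
      by (intro proximal_points_equal_if_acting_through_compact[OF act prox H U inverse]) auto
  qed
  then show "\<exists>y\<in>topspace TY. \<forall>g\<in>G. a g y = y"
    using y FT by blast
qed

section \<open>Balls in a locally finite graph and the compact group \<open>K\<close>\<close>

fun graph_ball :: "('v \<Rightarrow> 'v \<Rightarrow> bool) \<Rightarrow> 'v \<Rightarrow> nat \<Rightarrow> 'v set" where
  "graph_ball E v0 0 = {v0}"
| "graph_ball E v0 (Suc r) = graph_ball E v0 r \<union> (\<Union>u\<in>graph_ball E v0 r. {w. E u w})"

lemma finite_graph_ball:
  assumes "\<And>x. finite {y. E x y}"
  shows "finite (graph_ball E v0 r)"
  by (induction r) (auto simp: assms)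

lemma graph_ball_mono: "r \<le> r' \<Longrightarrow> graph_ball E v0 r \<subseteq> graph_ball E v0 r'"
  by (induction r' rule: dec_induct) auto

lemma graph_ball_exhausts:
  assumes "E\<^sup>*\<^sup>* v0 v"
  shows "\<exists>r. v \<in> graph_ball E v0 r"
  using assms
proof (induction rule: rtranclp_induct)
  case base
  have "v0 \<in> graph_ball E v0 0" by simp
  then show ?case by blast
next
  case (step y z)
  then obtain r where "y \<in> graph_ball E v0 r" by blast
  with step.hyps(2) have "z \<in> graph_ball E v0 (Suc r)" by (simp add: bexI)
  then show ?case by blast
qed

lemma finite_subset_graph_ball:
  assumes "finite D" and conn: "\<And>v. E\<^sup>*\<^sup>* v0 v"
  shows "\<exists>r. D \<subseteq> graph_ball E v0 r"
proof -
  define \<rho> where "\<rho> v = (LEAST r. v \<in> graph_ball E v0 r)" for v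
  have \<rho>: "v \<in> graph_ball E v0 (\<rho> v)" for v
    unfolding \<rho>_def using graph_ball_exhausts[OF conn] by (rule LeastI_ex)
  have "v \<in> graph_ball E v0 (Max (\<rho> ` D))" if "v \<in> D" for v
  proof -
    have "\<rho> v \<le> Max (\<rho> ` D)" using \<open>finite D\<close> that by simp
    then have "graph_ball E v0 (\<rho> v) \<subseteq> graph_ball E v0 (Max (\<rho> ` D))"
      by (rule graph_ball_mono)
    then show ?thesis using \<rho>[of v] by blast
  qed
  then have "D \<subseteq> graph_ball E v0 (Max (\<rho> ` D))" by blast
  then show ?thesis by blast
qed

lemma stab_K_preserves_graph_ball:
  assumes "\<gamma> \<in> stab_K E v0" "v \<in> graph_ball E v0 r"
  shows "\<gamma> v \<in> graph_ball E v0 r"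
  using assms(2)
proof (induction r arbitrary: v)
  case 0
  then show ?case using assms(1) by (simp add: stab_K_def)
next
  case (Suc r)
  have E: "\<And>x y. E x y \<longleftrightarrow> E (\<gamma> x) (\<gamma> y)"
    using assms(1) by (simp add: stab_K_def tree_aut_def)
  from Suc.prems show ?case
  proof (cases "v \<in> graph_ball E v0 r")
    case False
    with Suc.prems obtain u where "u \<in> graph_ball E v0 r" "E u v" by auto
    with Suc.IH E[of u v] show ?thesis by auto
  qed (use Suc.IH in auto)
qed

lemma inv_in_stab_K:
  assumes "\<gamma> \<in> stab_K E v0"
  shows "inv \<gamma> \<in> stab_K E v0"
proof -
  have b: "bij \<gamma>" and E: "\<And>x y. E x y \<longleftrightarrow> E (\<gamma> x) (\<gamma> y)" and "\<gamma> v0 = v0"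
    using assms by (auto simp: stab_K_def tree_aut_def)
  have "E x y \<longleftrightarrow> E (inv \<gamma> x) (inv \<gamma> y)" for x y
    using E[of "inv \<gamma> x" "inv \<gamma> y"] b by (simp add: bij_is_surj surj_f_inv_f)
  moreover have "inv \<gamma> v0 = v0"
    using \<open>\<gamma> v0 = v0\<close> b by (metis bij_inv_eq_iff)
  ultimately show ?thesis
    using b by (simp add: stab_K_def tree_aut_def bij_imp_bij_inv)
qed

lemma id_in_stab_K: "id \<in> stab_K E v0"
  by (simp add: stab_K_def tree_aut_def)

lemma comp_in_stab_K: "\<gamma> \<in> stab_K E v0 \<Longrightarrow> \<delta> \<in> stab_K E v0 \<Longrightarrow> \<gamma> \<circ> \<delta> \<in> stab_K E v0"
  by (auto simp: stab_K_def tree_aut_def bij_comp)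

abbreviation pointwise_topology :: "('a \<Rightarrow> 'b) topology" where
  "pointwise_topology \<equiv> product_topology (\<lambda>_. discrete_topology UNIV) UNIV"

lemma topspace_pointwise_topology: "topspace pointwise_topology = UNIV"
  by (simp add: PiE_UNIV_domain)

lemma openin_pointwise_cylinder:
  assumes "finite D"
  shows "openin pointwise_topology {f. \<forall>x\<in>D. f x = g x}"
  using assms
proof (induction rule: finite_induct)
  case empty
  then show ?case
    using openin_topspace[of pointwise_topology] by (simp add: topspace_pointwise_topology)
next
  case (insert a D)
  have "openin pointwise_topology {f \<in> topspace pointwise_topology. f a \<in> {g a}}"
    by (rule openin_continuous_map_preimage[OF continuous_map_product_projection]) auto
  then have "openin pointwise_topology {f. f a = g a}"
    by (simp add: topspace_pointwise_topology)
  from openin_Int[OF this insert.IH] show ?case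
    by (simp add: Int_def conj_commute)
qed

lemma closedin_pointwise_finitely_determined:
  assumes "finite D" and det: "\<And>f g. \<forall>x\<in>D. f x = g x \<Longrightarrow> P f \<longleftrightarrow> P g"
  shows "closedin pointwise_topology {f. P f}"
proof -
  have "UNIV - {f. P f} = (\<Union>g\<in>{g. \<not> P g}. {f. \<forall>x\<in>D. f x = g x})"
    using det by auto
  moreover have "openin pointwise_topology (\<Union>g\<in>{g. \<not> P g}. {f. \<forall>x\<in>D. f x = g x})"
    using openin_pointwise_cylinder[OF \<open>finite D\<close>] by (intro openin_Union) auto
  ultimately have "openin pointwise_topology (UNIV - {f. P f})"
    by simp
  then show ?thesis
    unfolding closedin_def topspace_pointwise_topology by blast
qed

text \<open>Membership in \<open>stab_K\<close> is a conjunction of conditions each involving finitely many vertices;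
  surjectivity becomes one because automorphisms fixing \<open>v0\<close> map each ball onto itself.\<close>

lemma stab_K_eq_INT:
  assumes conn: "\<And>v. E\<^sup>*\<^sup>* v0 v"
  shows "stab_K E v0 = (\<Inter>(x, y, r) \<in> UNIV. {\<gamma>. (E x y \<longleftrightarrow> E (\<gamma> x) (\<gamma> y)) \<and>
            (\<gamma> x = \<gamma> y \<longrightarrow> x = y) \<and> \<gamma> v0 = v0 \<and>
            (\<forall>w\<in>graph_ball E v0 r. \<exists>v\<in>graph_ball E v0 r. \<gamma> v = w)})"
    (is "_ = ?K")
proof
  show "stab_K E v0 \<subseteq> ?K"
  proof clarify
    fix \<gamma> x y r assume \<gamma>: "\<gamma> \<in> stab_K E v0"
    then have "bij \<gamma>" "E x y \<longleftrightarrow> E (\<gamma> x) (\<gamma> y)" "\<gamma> v0 = v0"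
      by (auto simp: stab_K_def tree_aut_def)
    moreover have "\<exists>v\<in>graph_ball E v0 r. \<gamma> v = w" if "w \<in> graph_ball E v0 r" for w
      using stab_K_preserves_graph_ball[OF inv_in_stab_K[OF \<gamma>] that] \<open>bij \<gamma>\<close>
      by (metis bij_inv_eq_iff)
    ultimately show "(E x y \<longleftrightarrow> E (\<gamma> x) (\<gamma> y)) \<and> (\<gamma> x = \<gamma> y \<longrightarrow> x = y) \<and> \<gamma> v0 = v0 \<and>
        (\<forall>w\<in>graph_ball E v0 r. \<exists>v\<in>graph_ball E v0 r. \<gamma> v = w)"
      by (auto simp: bij_def inj_eq)
  qed
  show "?K \<subseteq> stab_K E v0"
  proof
    fix \<gamma> assume \<gamma>: "\<gamma> \<in> ?K"
    then have "inj \<gamma>" by (auto intro: injI)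
    moreover have "surj \<gamma>"
      unfolding surj_def
    proof
      fix w
      obtain r where "w \<in> graph_ball E v0 r"
        using graph_ball_exhausts[OF conn] by blast
      then show "\<exists>v. w = \<gamma> v" using \<gamma> by fastforce
    qed
    ultimately show "\<gamma> \<in> stab_K E v0"
      using \<gamma> by (auto simp: stab_K_def tree_aut_def bij_def)
  qed
qed

lemma closedin_stab_K:
  assumes conn: "\<And>v. E\<^sup>*\<^sup>* v0 v" and fin: "\<And>x. finite {y. E x y}"
  shows "closedin pointwise_topology (stab_K E v0)"
  unfolding stab_K_eq_INT[OF conn]
proof (intro closedin_INT, simp, clarify)
  fix x y r
  show "closedin pointwise_topology {\<gamma>. (E x y \<longleftrightarrow> E (\<gamma> x) (\<gamma> y)) \<and> (\<gamma> x = \<gamma> y \<longrightarrow> x = y) \<and>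
          \<gamma> v0 = v0 \<and> (\<forall>w\<in>graph_ball E v0 r. \<exists>v\<in>graph_ball E v0 r. \<gamma> v = w)}"
    by (rule closedin_pointwise_finitely_determined[of "{x, y, v0} \<union> graph_ball E v0 r"])
      (auto simp: finite_graph_ball fin)
qed

lemma compactin_stab_K:
  assumes conn: "\<And>v. E\<^sup>*\<^sup>* v0 v" and fin: "\<And>x. finite {y. E x y}"
  shows "compactin pointwise_topology (stab_K E v0)"
proof (rule closed_compactin)
  define \<rho> where "\<rho> v = (LEAST r. v \<in> graph_ball E v0 r)" for v
  have \<rho>: "v \<in> graph_ball E v0 (\<rho> v)" for v
    unfolding \<rho>_def using graph_ball_exhausts[OF conn] by (rule LeastI_ex)
  show "compactin pointwise_topology (PiE UNIV (\<lambda>v. graph_ball E v0 (\<rho> v)))"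
    by (simp add: compactin_PiE compactin_discrete_topology finite_graph_ball fin)
  show "stab_K E v0 \<subseteq> PiE UNIV (\<lambda>v. graph_ball E v0 (\<rho> v))"
    using stab_K_preserves_graph_ball[OF _ \<rho>] by auto
qed (rule closedin_stab_K[OF conn fin])

lemma compact_space_Utop:
  assumes conn: "\<And>v. E\<^sup>*\<^sup>* v0 v" and fin: "\<And>x. finite {y. E x y}"
  shows "compact_space (Utop n E v0)"
proof -
  have "finite {p. p permutes {..<n} \<and> p 0 = 0}"
    by (rule finite_subset[OF _ finite_permutations[of "{..<n}"]]) auto
  then show ?thesis
    unfolding Utop_def
    by (simp add: compact_space_prod_topology compact_space_product_topology
        compact_space_discrete_topology compact_space_subtopology compactin_stab_K[OF conn fin])
qed

section \<open>The group \<open>H\<close>\<close>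

lemma Hmult_Pair: "Hmult (\<sigma>, \<gamma>) (\<tau>, \<delta>) = (\<lambda>v. \<sigma> v \<circ> \<tau> (inv \<gamma> v), \<gamma> \<circ> \<delta>)"
  by (simp add: Hmult_def)

lemma Hmult_Hone_left: "Hmult Hone u = u"
  by (cases u) (simp add: Hone_def Hmult_def)

lemma Hone_in_Hgrp: "Hone \<in> Hgrp n E v0"
  by (simp add: Hone_def Hgrp_def permutes_id id_in_stab_K)

lemma Usub_subset_Hgrp: "Usub n E v0 \<subseteq> Hgrp n E v0"
  by (auto simp: Usub_def Hgrp_def)

lemma Hmult_Hgrp_Usub:
  assumes "g \<in> Hgrp n E v0" "u \<in> Usub n E v0"
  shows "Hmult g u \<in> Hgrp n E v0"
proof -
  obtain \<sigma> \<gamma> \<tau> \<delta> where g: "g = (\<sigma>, \<gamma>)" and u: "u = (\<tau>, \<delta>)"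
    by (cases g, cases u) auto
  have "{v. (\<sigma> v \<circ> \<tau> (inv \<gamma> v)) 0 \<noteq> 0} = {v. \<sigma> v 0 \<noteq> 0}"
    using assms(2) by (simp add: u Usub_def)
  with assms show ?thesis
    by (auto simp: g u Hmult_Pair Hgrp_def Usub_def intro: permutes_compose comp_in_stab_K)
qed

lemma Usub_left_inverse:
  assumes "u \<in> Usub n E v0"
  shows "\<exists>u'\<in>Usub n E v0. Hmult u' u = Hone"
proof -
  obtain \<tau> \<delta> where u: "u = (\<tau>, \<delta>)" by (cases u)
  have \<tau>: "\<And>v. \<tau> v permutes {..<n}" "\<And>v. \<tau> v 0 = 0" and \<delta>: "\<delta> \<in> stab_K E v0"
    using assms by (auto simp: u Usub_def)
  have "bij \<delta>" using \<delta> by (simp add: stab_K_def tree_aut_def)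
  have "inv (\<tau> (\<delta> v)) 0 = 0" for v
    using \<tau>(2)[of "\<delta> v"] permutes_inverses(2)[OF \<tau>(1)] by metis
  then have "(\<lambda>v. inv (\<tau> (\<delta> v)), inv \<delta>) \<in> Usub n E v0"
    using \<tau>(1) inv_in_stab_K[OF \<delta>] by (auto simp: Usub_def intro: permutes_inv)
  moreover have "Hmult (\<lambda>v. inv (\<tau> (\<delta> v)), inv \<delta>) u = Hone"
    using permutes_inv_o(2)[OF \<tau>(1)] \<open>bij \<delta>\<close>
    by (simp add: u Hmult_Pair Hone_def inv_inv_eq bij_is_inj)
  ultimately show ?thesis by blast
qed

lemma openin_Htop:
  "openin (Htop n E v0) W \<longleftrightarrow>
     W \<subseteq> Hgrp n E v0 \<and> (\<forall>g \<in> Hgrp n E v0. openin (Utop n E v0) {u \<in> Usub n E v0. Hmult g u \<in> W})"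
proof -
  let ?P = "\<lambda>W. W \<subseteq> Hgrp n E v0 \<and>
              (\<forall>g \<in> Hgrp n E v0. openin (Utop n E v0) {u \<in> Usub n E v0. Hmult g u \<in> W})"
  have "?P (S \<inter> T)" if "?P S" "?P T" for S T
  proof -
    have "{u \<in> Usub n E v0. Hmult g u \<in> S \<inter> T} =
        {u \<in> Usub n E v0. Hmult g u \<in> S} \<inter> {u \<in> Usub n E v0. Hmult g u \<in> T}" for g
      by auto
    then show ?thesis using that by (auto intro: openin_Int)
  qed
  moreover have "?P (\<Union>\<K>)" if "\<forall>S\<in>\<K>. ?P S" for \<K>
  proof -
    have "{u \<in> Usub n E v0. Hmult g u \<in> \<Union>\<K>} = (\<Union>S\<in>\<K>. {u \<in> Usub n E v0. Hmult g u \<in> S})" for g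
      by auto
    then show ?thesis using that by auto
  qed
  ultimately have "istopology ?P"
    unfolding istopology_def by blast
  then show ?thesis
    unfolding Htop_def by (simp only: topology_inverse')
qed

lemma topspace_Utop: "topspace (Utop n E v0) = Usub n E v0"
  by (auto simp: Utop_def Usub_def PiE_UNIV_domain)

lemma topspace_Htop: "topspace (Htop n E v0) = Hgrp n E v0"
proof
  show "topspace (Htop n E v0) \<subseteq> Hgrp n E v0"
    unfolding topspace_def openin_Htop by auto
  have "openin (Htop n E v0) (Hgrp n E v0)"
    unfolding openin_Htop
  proof (intro conjI ballI subset_refl)
    fix g assume "g \<in> Hgrp n E v0"
    then have "{u \<in> Usub n E v0. Hmult g u \<in> Hgrp n E v0} = topspace (Utop n E v0)"
      using Hmult_Hgrp_Usub[OF \<open>g \<in> Hgrp n E v0\<close>] unfolding topspace_Utop by blast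
    then show "openin (Utop n E v0) {u \<in> Usub n E v0. Hmult g u \<in> Hgrp n E v0}"
      by simp
  qed
  then show "Hgrp n E v0 \<subseteq> topspace (Htop n E v0)"
    by (rule openin_subset)
qed

lemma compactin_Usub:
  assumes conn: "\<And>v. E\<^sup>*\<^sup>* v0 v" and fin: "\<And>x. finite {y. E x y}"
  shows "compactin (Htop n E v0) (Usub n E v0)"
proof -
  have "continuous_map (Utop n E v0) (Htop n E v0) id"
    unfolding continuous_map_def
  proof (intro conjI allI impI)
    show "id \<in> topspace (Utop n E v0) \<rightarrow> topspace (Htop n E v0)"
      using Usub_subset_Hgrp[of n E v0] unfolding topspace_Utop topspace_Htop by (simp add: subset_eq)
    fix W assume "openin (Htop n E v0) W"
    then have "openin (Utop n E v0) {u \<in> Usub n E v0. Hmult Hone u \<in> W}"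
      using Hone_in_Hgrp[of n E v0] unfolding openin_Htop by blast
    then show "openin (Utop n E v0) {x \<in> topspace (Utop n E v0). id x \<in> W}"
      by (simp add: Hmult_Hone_left topspace_Utop)
  qed
  from image_compactin[OF _ this] show ?thesis
    using compact_space_Utop[OF conn fin] by (simp add: compact_space_def topspace_Utop)
qed

definition ball_perms :: "nat \<Rightarrow> ('v \<Rightarrow> 'v \<Rightarrow> bool) \<Rightarrow> 'v \<Rightarrow> nat \<Rightarrow> (('v \<Rightarrow> nat \<Rightarrow> nat) \<times> ('v \<Rightarrow> 'v)) set" where
  "ball_perms n E v0 r =
     {(\<sigma>, id) | \<sigma>. (\<forall>v. \<sigma> v permutes {..<n}) \<and> (\<forall>v. v \<notin> graph_ball E v0 r \<longrightarrow> \<sigma> v = id)}"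

definition Hconj :: "(('v \<Rightarrow> nat \<Rightarrow> nat) \<times> ('v \<Rightarrow> 'v)) \<Rightarrow> (('v \<Rightarrow> nat \<Rightarrow> nat) \<times> ('v \<Rightarrow> 'v))
                      \<Rightarrow> (('v \<Rightarrow> nat \<Rightarrow> nat) \<times> ('v \<Rightarrow> 'v))" where
  "Hconj h x = (\<lambda>v. fst h v \<circ> fst x (inv (snd h) v) \<circ> inv (fst h v), id)"

lemma ball_perms_mono: "r \<le> r' \<Longrightarrow> ball_perms n E v0 r \<subseteq> ball_perms n E v0 r'"
  using graph_ball_mono[of r r' E v0] unfolding ball_perms_def by blast

lemma finite_ball_perms:
  assumes fin: "\<And>x. finite {y. E x y}"
  shows "finite (ball_perms n E v0 r)"
proof -
  let ?B = "graph_ball E v0 r"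
  let ?extend = "\<lambda>f. (\<lambda>v. if v \<in> ?B then f v else id, id)"
  have "ball_perms n E v0 r \<subseteq> ?extend ` (PiE ?B (\<lambda>_. {p. p permutes {..<n}}))"
  proof
    fix x assume "x \<in> ball_perms n E v0 r"
    then obtain \<sigma> where x: "x = (\<sigma>, id)" and \<sigma>: "\<And>v. \<sigma> v permutes {..<n}"
      "\<And>v. v \<notin> ?B \<Longrightarrow> \<sigma> v = id"
      unfolding ball_perms_def by blast
    have "x = ?extend (restrict \<sigma> ?B)"
      using \<sigma>(2) by (auto simp: x fun_eq_iff)
    moreover have "restrict \<sigma> ?B \<in> PiE ?B (\<lambda>_. {p. p permutes {..<n}})"
      using \<sigma>(1) by simp
    ultimately show "x \<in> ?extend ` (PiE ?B (\<lambda>_. {p. p permutes {..<n}}))"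
      by (rule image_eqI)
  qed
  moreover have "finite (PiE ?B (\<lambda>_. {p. p permutes {..<n}}))"
    by (intro finite_PiE finite_graph_ball fin) (simp add: finite_permutations)
  ultimately show ?thesis
    by (rule finite_subset[OF _ finite_imageI])
qed

lemma ball_perms_subset_Hgrp:
  assumes fin: "\<And>x. finite {y. E x y}"
  shows "ball_perms n E v0 r \<subseteq> Hgrp n E v0"
proof
  fix x assume "x \<in> ball_perms n E v0 r"
  then obtain \<sigma> where x: "x = (\<sigma>, id)" and \<sigma>: "\<And>v. \<sigma> v permutes {..<n}"
    "\<And>v. v \<notin> graph_ball E v0 r \<Longrightarrow> \<sigma> v = id"
    unfolding ball_perms_def by blast
  have "{v. \<sigma> v 0 \<noteq> 0} \<subseteq> graph_ball E v0 r"
    using \<sigma>(2) by force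
  then have "finite {v. \<sigma> v 0 \<noteq> 0}"
    using finite_graph_ball[OF fin] by (rule finite_subset)
  then show "x \<in> Hgrp n E v0"
    using \<sigma>(1) id_in_stab_K by (simp add: x Hgrp_def)
qed

lemma Hmult_Hconj:
  assumes "h \<in> Hgrp n E v0" "x \<in> ball_perms n E v0 r"
  shows "Hmult h x = Hmult (Hconj h x) h"
proof -
  obtain \<sigma> \<gamma> \<tau> where h: "h = (\<sigma>, \<gamma>)" and x: "x = (\<tau>, id)"
    using assms(2) unfolding ball_perms_def by (cases h) blast
  have "\<sigma> v permutes {..<n}" for v
    using assms(1) by (simp add: h Hgrp_def)
  then have "(\<sigma> v \<circ> \<tau> (inv \<gamma> v) \<circ> inv (\<sigma> v)) \<circ> \<sigma> v = \<sigma> v \<circ> \<tau> (inv \<gamma> v)" for v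
    using permutes_inv_o(2) by (metis comp_id fun.map_comp)
  then show ?thesis
    by (simp add: h x Hconj_def Hmult_Pair)
qed

lemma Hconj_in_ball_perms:
  assumes "h \<in> Hgrp n E v0" "x \<in> ball_perms n E v0 r"
  shows "Hconj h x \<in> ball_perms n E v0 r"
proof -
  obtain \<sigma> \<gamma> \<tau> where h: "h = (\<sigma>, \<gamma>)" and x: "x = (\<tau>, id)"
    and \<tau>: "\<And>v. \<tau> v permutes {..<n}" "\<And>v. v \<notin> graph_ball E v0 r \<Longrightarrow> \<tau> v = id"
    using assms(2) unfolding ball_perms_def by (cases h) blast
  have \<sigma>: "\<And>v. \<sigma> v permutes {..<n}" and \<gamma>: "\<gamma> \<in> stab_K E v0"
    using assms(1) by (auto simp: h Hgrp_def)
  have "inv \<gamma> v \<notin> graph_ball E v0 r" if "v \<notin> graph_ball E v0 r" for v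
  proof
    assume "inv \<gamma> v \<in> graph_ball E v0 r"
    from stab_K_preserves_graph_ball[OF \<gamma> this] that \<gamma> show False
      by (simp add: stab_K_def tree_aut_def bij_is_surj surj_f_inv_f)
  qed
  then have "\<sigma> v \<circ> \<tau> (inv \<gamma> v) \<circ> inv (\<sigma> v) = id" if "v \<notin> graph_ball E v0 r" for v
    using that \<tau>(2) permutes_inv_o(1)[OF \<sigma>] by simp
  moreover have "\<sigma> v \<circ> \<tau> (inv \<gamma> v) \<circ> inv (\<sigma> v) permutes {..<n}" for v
    by (intro permutes_compose permutes_inv \<sigma> \<tau>)
  ultimately show ?thesis
    by (auto simp: ball_perms_def Hconj_def h x)
qed

lemma inj_on_Hconj:
  assumes "h \<in> Hgrp n E v0"
  shows "inj_on (Hconj h) (ball_perms n E v0 r)"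
proof
  fix x1 x2 assume "x1 \<in> ball_perms n E v0 r" "x2 \<in> ball_perms n E v0 r"
    and eq: "Hconj h x1 = Hconj h x2"
  then obtain \<tau>1 \<tau>2 where x: "x1 = (\<tau>1, id)" "x2 = (\<tau>2, id)"
    unfolding ball_perms_def by blast
  obtain \<sigma> \<gamma> where h: "h = (\<sigma>, \<gamma>)" by (cases h)
  have \<sigma>: "\<And>v. \<sigma> v permutes {..<n}" and "bij \<gamma>"
    using assms by (auto simp: h Hgrp_def stab_K_def tree_aut_def)
  have "\<tau>1 w = \<tau>2 w" for w
  proof -
    let ?p = "\<sigma> (\<gamma> w)"
    have conj: "?p \<circ> \<tau>1 w \<circ> inv ?p = ?p \<circ> \<tau>2 w \<circ> inv ?p"
      using fun_cong[OF arg_cong[OF eq, of fst], of "\<gamma> w"] \<open>bij \<gamma>\<close>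
      by (simp add: h x Hconj_def bij_is_inj)
    have "?p (\<tau>1 w y) = ?p (\<tau>2 w y)" for y
      using fun_cong[OF conj, of "?p y"] permutes_inverses(2)[OF \<sigma>] by simp
    then show ?thesis
      using permutes_inj[OF \<sigma>] by (simp add: fun_eq_iff inj_eq)
  qed
  then show "x1 = x2" by (simp add: x fun_eq_iff)
qed

lemma bij_betw_Hconj:
  assumes fin: "\<And>x. finite {y. E x y}" and "h \<in> Hgrp n E v0"
  shows "bij_betw (Hconj h) (ball_perms n E v0 r) (ball_perms n E v0 r)"
proof -
  have "Hconj h ` ball_perms n E v0 r \<subseteq> ball_perms n E v0 r"
    using Hconj_in_ball_perms[OF assms(2)] by blast
  with endo_inj_surj[OF finite_ball_perms[OF fin] this inj_on_Hconj[OF assms(2)]] show ?thesis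
    using inj_on_Hconj[OF assms(2)] by (simp add: bij_betw_def)
qed

lemma Hgrp_decomposition:
  assumes conn: "\<And>v. E\<^sup>*\<^sup>* v0 v" and "h \<in> Hgrp n E v0"
  shows "\<exists>r. \<exists>x\<in>ball_perms n E v0 r. \<exists>u\<in>Usub n E v0. h = Hmult x u"
proof -
  obtain \<sigma> \<gamma> where h: "h = (\<sigma>, \<gamma>)" by (cases h)
  have \<sigma>: "\<And>v. \<sigma> v permutes {..<n}" "finite {v. \<sigma> v 0 \<noteq> 0}" and "\<gamma> \<in> stab_K E v0"
    using assms(2) by (auto simp: h Hgrp_def)
  obtain r where r: "{v. \<sigma> v 0 \<noteq> 0} \<subseteq> graph_ball E v0 r"
    using finite_subset_graph_ball[OF \<sigma>(2) conn] by blast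
  let ?x = "(\<lambda>v. if \<sigma> v 0 \<noteq> 0 then \<sigma> v else id, id)"
  let ?u = "(\<lambda>v. if \<sigma> v 0 \<noteq> 0 then id else \<sigma> v, \<gamma>)"
  have "?x \<in> ball_perms n E v0 r"
    using \<sigma>(1) r by (auto simp: ball_perms_def permutes_id)
  moreover have "?u \<in> Usub n E v0"
    using \<sigma>(1) \<open>\<gamma> \<in> stab_K E v0\<close> by (auto simp: Usub_def permutes_id)
  moreover have "h = Hmult ?x ?u"
    by (auto simp: h Hmult_Pair fun_eq_iff)
  ultimately show ?thesis by blast
qed

theorem proposition3:
  fixes E :: "'v \<Rightarrow> 'v \<Rightarrow> bool" and v0 :: 'v and n d :: nat
  assumes "n \<ge> 2" and "d \<ge> 3" and "regular_tree E d"
  shows "strongly_amenable TYPE('y) (Hgrp n E v0) Hmult Hone (Htop n E v0)"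
proof -
  have conn: "\<And>v. E\<^sup>*\<^sup>* v0 v" and fin: "\<And>x. finite {y. E x y}"
    using assms(3) by (auto simp: regular_tree_def)
  show ?thesis
  proof (rule strongly_amenable_finite_chain_times_compact
      [where M = "ball_perms n E v0" and U = "Usub n E v0"])
    show "incseq (ball_perms n E v0)"
      by (simp add: incseq_def ball_perms_mono)
    show "\<exists>c. bij_betw c (ball_perms n E v0 r) (ball_perms n E v0 r) \<and>
            (\<forall>x\<in>ball_perms n E v0 r. Hmult h x = Hmult (c x) h)" if "h \<in> Hgrp n E v0" for h r
      using bij_betw_Hconj[OF fin that] Hmult_Hconj[OF that] by blast
    show "\<exists>u'\<in>Hgrp n E v0. Hmult u' u = Hone" if "u \<in> Usub n E v0" for u
      using Usub_left_inverse[OF that] Usub_subset_Hgrp[of n E v0] by blast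
    show "\<exists>r. \<exists>x\<in>ball_perms n E v0 r. \<exists>u\<in>Usub n E v0. h = Hmult x u" if "h \<in> Hgrp n E v0" for h
      by (rule Hgrp_decomposition[OF conn that])
  qed (use fin conn in \<open>simp_all add: topspace_Htop finite_ball_perms
        ball_perms_subset_Hgrp compactin_Usub Usub_subset_Hgrp\<close>)
qed

end
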